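(* Let $\mathcal{X}$ be a finite-dimensional Hilbert space, $\Phi,\Psi$ quantum channels on $\mathcal{L}(\mathcal{X})$, and $\sigma=|\psi\rangle\langle\psi|$ a pure state. Then $G_{\mathrm{ch}}(\Phi,\Psi;\sigma)=G(\Phi(\sigma),\Psi(\sigma))$.
   Context: Superfidelity: $G(\rho_1,\rho_2)=\operatorname{Tr}(\rho_1\rho_2)+\sqrt{1-\operatorname{Tr}\rho_1^2}\sqrt{1-\operatorname{Tr}\rho_2^2}$. Channel superfidelity: $G_{\mathrm{ch}}(\Phi,\Psi;\sigma)=\inf G\big((\Phi\otimes\mathbb{1}_{\mathcal{L}(\mathcal{Z})})(\xi),(\Psi\otimes\mathbb{1}_{\mathcal{L}(\mathcal{Z})})(\xi)\big)$ over all finite-dimensional $\mathcal{Z}$ and all pure states $\xi=|\zeta\rangle\langle\zeta|$ on $\mathcal{X}\otimes\mathcal{Z}$ with $\operatorname{Tr}_{\mathcal{Z}}\xi=\sigma$. *)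

theory Defs
  imports Complex_Main "Jordan_Normal_Form.Matrix"
begin

text \<open>Finite-dimensional Hilbert spaces are modelled as \<open>\<complex>^d\<close>; operators in
  \<open>L(\<complex>^d)\<close> are \<open>d \<times> d\<close> complex matrices (Jordan_Normal_Form).  The space
  \<open>X \<otimes> Z\<close> with \<open>dim X = n\<close>, \<open>dim Z = k\<close> is \<open>\<complex>^(n*k)\<close>, basis vector
  \<open>e_i \<otimes> f_a\<close> having index \<open>i*k + a\<close>.\<close>

definition mtrace :: "complex mat \<Rightarrow> complex" where
  "mtrace A = (\<Sum>i<dim_row A. A $$ (i, i))"

definition psd :: "nat \<Rightarrow> complex mat \<Rightarrow> bool" where
  "psd d A \<longleftrightarrow> A \<in> carrier_mat d d \<and>
     (\<forall>v \<in> carrier_vec d. Im (conjugate v \<bullet> (A *\<^sub>v v)) = 0 \<and> Re (conjugate v \<bullet> (A *\<^sub>v v)) \<ge> 0)"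

definition density :: "nat \<Rightarrow> complex mat \<Rightarrow> bool" where
  "density d \<rho> \<longleftrightarrow> psd d \<rho> \<and> mtrace \<rho> = 1"

definition unit_vector :: "nat \<Rightarrow> complex vec \<Rightarrow> bool" where
  "unit_vector d v \<longleftrightarrow> v \<in> carrier_vec d \<and> v \<bullet>c v = 1"

definition proj :: "complex vec \<Rightarrow> complex mat" where
  "proj v = mat (dim_vec v) (dim_vec v) (\<lambda>(i, j). v $ i * cnj (v $ j))"

text \<open>Block \<open>(a,b)\<close> of an operator on \<open>X \<otimes> Z\<close>: \<open>(1 \<otimes> \<langle>a|) \<xi> (1 \<otimes> |b\<rangle>)\<close>.\<close>
definition blk :: "nat \<Rightarrow> nat \<Rightarrow> complex mat \<Rightarrow> nat \<Rightarrow> nat \<Rightarrow> complex mat" where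
  "blk n k \<xi> a b = mat n n (\<lambda>(i, j). \<xi> $$ (i * k + a, j * k + b))"

text \<open>\<open>(\<Phi> \<otimes> 1_{L(Z)})(\<xi>)\<close> for a linear map \<open>\<Phi>\<close> on \<open>L(\<complex>^n)\<close>, \<open>dim Z = k\<close>:
  \<open>\<Sum>_{a,b} \<Phi>(\<xi>_{ab}) \<otimes> |a\<rangle>\<langle>b|\<close>.\<close>
definition tensor_id :: "nat \<Rightarrow> nat \<Rightarrow> (complex mat \<Rightarrow> complex mat) \<Rightarrow> complex mat \<Rightarrow> complex mat" where
  "tensor_id n k \<Phi> \<xi> = mat (n * k) (n * k)
     (\<lambda>(p, q). \<Phi> (blk n k \<xi> (p mod k) (q mod k)) $$ (p div k, q div k))"

definition ptrace_Z :: "nat \<Rightarrow> nat \<Rightarrow> complex mat \<Rightarrow> complex mat" where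
  "ptrace_Z n k \<xi> = mat n n (\<lambda>(i, j). \<Sum>a<k. \<xi> $$ (i * k + a, j * k + a))"

definition linear_map_on :: "nat \<Rightarrow> (complex mat \<Rightarrow> complex mat) \<Rightarrow> bool" where
  "linear_map_on n \<Phi> \<longleftrightarrow>
     (\<forall>A \<in> carrier_mat n n. \<Phi> A \<in> carrier_mat n n) \<and>
     (\<forall>A \<in> carrier_mat n n. \<forall>B \<in> carrier_mat n n. \<Phi> (A + B) = \<Phi> A + \<Phi> B) \<and>
     (\<forall>A \<in> carrier_mat n n. \<forall>c. \<Phi> (c \<cdot>\<^sub>m A) = c \<cdot>\<^sub>m \<Phi> A)"

definition completely_positive :: "nat \<Rightarrow> (complex mat \<Rightarrow> complex mat) \<Rightarrow> bool" where
  "completely_positive n \<Phi> \<longleftrightarrow>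
     (\<forall>k. \<forall>\<xi>. psd (n * k) \<xi> \<longrightarrow> psd (n * k) (tensor_id n k \<Phi> \<xi>))"

definition trace_preserving :: "nat \<Rightarrow> (complex mat \<Rightarrow> complex mat) \<Rightarrow> bool" where
  "trace_preserving n \<Phi> \<longleftrightarrow> (\<forall>A \<in> carrier_mat n n. mtrace (\<Phi> A) = mtrace A)"

definition quantum_channel :: "nat \<Rightarrow> (complex mat \<Rightarrow> complex mat) \<Rightarrow> bool" where
  "quantum_channel n \<Phi> \<longleftrightarrow> linear_map_on n \<Phi> \<and> completely_positive n \<Phi> \<and> trace_preserving n \<Phi>"

text \<open>Superfidelity (traces of products of density operators are real; we take real parts).\<close>
definition superfidelity :: "complex mat \<Rightarrow> complex mat \<Rightarrow> real" where
  "superfidelity \<rho>1 \<rho>2 = Re (mtrace (\<rho>1 * \<rho>2))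
     + sqrt (1 - Re (mtrace (\<rho>1 * \<rho>1))) * sqrt (1 - Re (mtrace (\<rho>2 * \<rho>2)))"

definition channel_superfidelity ::
  "nat \<Rightarrow> (complex mat \<Rightarrow> complex mat) \<Rightarrow> (complex mat \<Rightarrow> complex mat) \<Rightarrow> complex mat \<Rightarrow> real" where
  "channel_superfidelity n \<Phi> \<Psi> \<sigma> =
     (INF (k, \<zeta>) \<in> {(k, \<zeta>). unit_vector (n * k) \<zeta> \<and> ptrace_Z n k (proj \<zeta>) = \<sigma>}.
        superfidelity (tensor_id n k \<Phi> (proj \<zeta>)) (tensor_id n k \<Psi> (proj \<zeta>)))"

end

theory Submission
  imports Defs
begin

text \<open>If \<open>Tr_Z |\<zeta>\<rangle>\<langle>\<zeta>|\<close> is the pure state \<open>|\<psi>\<rangle>\<langle>\<psi>|\<close>, then \<open>\<zeta> = \<psi> \<otimes> \<phi>\<close> for a unit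
  vector \<open>\<phi>\<close>, namely \<open>\<phi> = (\<langle>\<psi>| \<otimes> 1) \<zeta>\<close>.  Hence
  \<open>(\<Phi> \<otimes> 1)(|\<zeta>\<rangle>\<langle>\<zeta>|) = \<Phi>(|\<psi>\<rangle>\<langle>\<psi>|) \<otimes> |\<phi>\<rangle>\<langle>\<phi>|\<close>, and since
  \<open>Tr((A \<otimes> P)(B \<otimes> P)) = Tr(AB) Tr(P\<^sup>2) = Tr(AB)\<close> for the pure state \<open>P = |\<phi>\<rangle>\<langle>\<phi>|\<close>,
  every purification in the infimum yields the same superfidelity
  \<open>G(\<Phi>(\<sigma>), \<Psi>(\<sigma>))\<close>.\<close>

lemma sum_lessThan_mult_nat:
  "(\<Sum>p<n * k. g p) = (\<Sum>i<n. \<Sum>a<k. (g :: nat \<Rightarrow> 'a::comm_monoid_add) (i * k + a))"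
proof -
  have "(\<Sum>p<n * k. g p) = (\<Sum>i<n. sum g {i * k..<i * k + k})"
    using sum.nat_group[of g k n] by simp
  also have "\<dots> = (\<Sum>i<n. \<Sum>a<k. g (i * k + a))"
  proof (rule sum.cong[OF refl])
    fix i
    have "sum g {0 + i * k..<k + i * k} = (\<Sum>a=0..<k. g (a + i * k))"
      by (rule sum.shift_bounds_nat_ivl)
    then show "sum g {i * k..<i * k + k} = (\<Sum>a<k. g (i * k + a))"
      by (simp add: add.commute atLeast0LessThan)
  qed
  finally show ?thesis .
qed

lemma mult_add_less_mult_nat:
  assumes "i < n" "a < k"
  shows "i * k + a < n * (k::nat)"
proof -
  have "i * k + a < Suc i * k" using assms(2) by simp
  also have "\<dots> \<le> n * k" using assms(1) by (intro mult_right_mono) auto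
  finally show ?thesis .
qed

lemma sum_mult_cnj_eq_0_iff:
  fixes z :: "'a \<Rightarrow> complex"
  assumes "finite A"
  shows "(\<Sum>a\<in>A. z a * cnj (z a)) = 0 \<longleftrightarrow> (\<forall>a\<in>A. z a = 0)"
proof -
  have norms: "(\<Sum>a\<in>A. z a * cnj (z a)) = complex_of_real (\<Sum>a\<in>A. (cmod (z a))\<^sup>2)"
    by (simp only: of_real_sum complex_norm_square)
  have "(\<Sum>a\<in>A. z a * cnj (z a)) = 0 \<longleftrightarrow> (\<Sum>a\<in>A. (cmod (z a))\<^sup>2) = 0"
    unfolding norms by (rule of_real_eq_0_iff)
  also have "\<dots> \<longleftrightarrow> (\<forall>a\<in>A. z a = 0)"
    by (simp add: sum_nonneg_eq_0_iff[OF assms])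
  finally show ?thesis .
qed

lemma mtrace_mult_carrier:
  assumes "A \<in> carrier_mat n m" "B \<in> carrier_mat m n"
  shows "mtrace (A * B) = (\<Sum>i<n. \<Sum>j<m. A $$ (i, j) * B $$ (j, i))"
  using assms by (simp add: mtrace_def scalar_prod_def atLeast0LessThan)

text \<open>Coordinates: \<open>M i a\<close> is the \<open>(e_i \<otimes> f_a)\<close>-coefficient of \<open>\<zeta>\<close>, and the hypothesis
  \<open>marginal\<close> says \<open>Tr_Z |\<zeta>\<rangle>\<langle>\<zeta>| = |\<psi>\<rangle>\<langle>\<psi>|\<close>.\<close>
locale pure_marginal =
  fixes n k :: nat and M :: "nat \<Rightarrow> nat \<Rightarrow> complex" and \<psi> :: "nat \<Rightarrow> complex"
  assumes unit: "(\<Sum>i<n. \<psi> i * cnj (\<psi> i)) = 1"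
    and marginal: "\<And>i j. i < n \<Longrightarrow> j < n \<Longrightarrow> (\<Sum>a<k. M i a * cnj (M j a)) = \<psi> i * cnj (\<psi> j)"
begin

definition factor :: "nat \<Rightarrow> complex" where
  "factor a = (\<Sum>j<n. cnj (\<psi> j) * M j a)"

lemma inner_factor:
  assumes "i < n"
  shows "(\<Sum>a<k. M i a * cnj (factor a)) = \<psi> i"
proof -
  have "(\<Sum>a<k. M i a * cnj (factor a)) = (\<Sum>a<k. \<Sum>j<n. \<psi> j * (M i a * cnj (M j a)))"
    by (simp add: factor_def cnj_sum sum_distrib_left mult.assoc mult.left_commute)
  also have "\<dots> = (\<Sum>j<n. \<psi> j * (\<Sum>a<k. M i a * cnj (M j a)))"
    by (subst sum.swap) (simp add: sum_distrib_left)
  also have "\<dots> = (\<Sum>j<n. \<psi> i * (\<psi> j * cnj (\<psi> j)))"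
    by (rule sum.cong) (auto simp: marginal assms)
  also have "\<dots> = \<psi> i"
    by (simp add: sum_distrib_left[symmetric] unit)
  finally show ?thesis .
qed

lemma factor_unit: "(\<Sum>a<k. factor a * cnj (factor a)) = 1"
proof -
  have "(\<Sum>a<k. factor a * cnj (factor a))
      = (\<Sum>a<k. \<Sum>j<n. cnj (\<psi> j) * (M j a * cnj (factor a)))"
    by (simp add: factor_def sum_distrib_right mult.assoc)
  also have "\<dots> = (\<Sum>j<n. cnj (\<psi> j) * (\<Sum>a<k. M j a * cnj (factor a)))"
    by (subst sum.swap) (simp add: sum_distrib_left)
  also have "\<dots> = (\<Sum>j<n. cnj (\<psi> j) * \<psi> j)"
    by (rule sum.cong) (auto simp: inner_factor)
  also have "\<dots> = 1"
    using unit by (simp add: mult.commute)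
  finally show ?thesis .
qed

text \<open>The defect \<open>M i - \<psi> i \<cdot> factor\<close> has squared norm
  \<open>|\<psi> i|\<^sup>2 - 2 |\<psi> i|\<^sup>2 + |\<psi> i|\<^sup>2 = 0\<close>.\<close>
lemma factorization:
  assumes "i < n" "a < k"
  shows "M i a = \<psi> i * factor a"
proof -
  let ?z = "\<lambda>a. M i a - \<psi> i * factor a"
  have inner_factor': "(\<Sum>a<k. factor a * cnj (M i a)) = cnj (\<psi> i)"
    using arg_cong[OF inner_factor[OF assms(1)], of cnj] by (simp add: cnj_sum mult.commute)
  have "(\<Sum>a<k. ?z a * cnj (?z a))
      = (\<Sum>a<k. M i a * cnj (M i a)) - cnj (\<psi> i) * (\<Sum>a<k. M i a * cnj (factor a))
        - \<psi> i * (\<Sum>a<k. factor a * cnj (M i a))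
        + \<psi> i * cnj (\<psi> i) * (\<Sum>a<k. factor a * cnj (factor a))"
    by (simp add: algebra_simps sum_distrib_left sum.distrib sum_subtractf)
  also have "\<dots> = 0"
    using inner_factor[OF assms(1)] inner_factor' factor_unit marginal[OF assms(1,1)] by simp
  finally show ?thesis
    unfolding sum_mult_cnj_eq_0_iff[OF finite_lessThan] using assms(2) by simp
qed

end

lemma ptrace_proj_eq_proj_imp_product:
  assumes \<psi>: "unit_vector n \<psi>" and \<zeta>: "\<zeta> \<in> carrier_vec (n * k)"
    and marginal: "ptrace_Z n k (proj \<zeta>) = proj \<psi>"
  obtains \<phi> where "(\<Sum>a<k. \<phi> a * cnj (\<phi> a)) = 1"
    and "\<And>i a. i < n \<Longrightarrow> a < k \<Longrightarrow> \<zeta> $ (i * k + a) = \<psi> $ i * \<phi> a"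
proof -
  have \<psi>_carrier: "\<psi> \<in> carrier_vec n" using \<psi> by (simp add: unit_vector_def)
  have "pure_marginal n k (\<lambda>i a. \<zeta> $ (i * k + a)) (\<lambda>i. \<psi> $ i)"
  proof
    show "(\<Sum>i<n. \<psi> $ i * cnj (\<psi> $ i)) = 1"
      using \<psi> \<psi>_carrier by (simp add: unit_vector_def scalar_prod_def atLeast0LessThan)
  next
    fix i j assume ij: "i < n" "j < n"
    have "(\<Sum>a<k. \<zeta> $ (i * k + a) * cnj (\<zeta> $ (j * k + a))) = ptrace_Z n k (proj \<zeta>) $$ (i, j)"
      using ij \<zeta> by (auto simp: ptrace_Z_def proj_def mult_add_less_mult_nat intro!: sum.cong)
    also have "\<dots> = proj \<psi> $$ (i, j)" by (simp only: marginal)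
    also have "\<dots> = \<psi> $ i * cnj (\<psi> $ j)" using ij \<psi>_carrier by (simp add: proj_def)
    finally show "(\<Sum>a<k. \<zeta> $ (i * k + a) * cnj (\<zeta> $ (j * k + a))) = \<psi> $ i * cnj (\<psi> $ j)" .
  qed
  then show ?thesis
    using that pure_marginal.factor_unit pure_marginal.factorization by blast
qed

text \<open>\<open>X \<otimes> |\<phi>\<rangle>\<langle>\<phi>|\<close> for \<open>X \<in> L(\<complex>^n)\<close> and \<open>\<phi> \<in> \<complex>^k\<close>, in the index convention of
  \<open>tensor_id\<close>.\<close>
definition tensor_proj :: "nat \<Rightarrow> nat \<Rightarrow> (nat \<Rightarrow> complex) \<Rightarrow> complex mat \<Rightarrow> complex mat" where
  "tensor_proj n k \<phi> X = mat (n * k) (n * k)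
     (\<lambda>(p, q). X $$ (p div k, q div k) * (\<phi> (p mod k) * cnj (\<phi> (q mod k))))"

lemma mtrace_tensor_proj_mult:
  assumes A: "A \<in> carrier_mat n n" and B: "B \<in> carrier_mat n n"
  shows "mtrace (tensor_proj n k \<phi> A * tensor_proj n k \<phi> B)
       = mtrace (A * B) * (\<Sum>a<k. \<phi> a * cnj (\<phi> a))\<^sup>2"
proof -
  let ?P = "\<lambda>a b. \<phi> a * cnj (\<phi> b)"
  have "mtrace (tensor_proj n k \<phi> A * tensor_proj n k \<phi> B)
      = (\<Sum>p<n * k. \<Sum>q<n * k. A $$ (p div k, q div k) * ?P (p mod k) (q mod k)
                              * (B $$ (q div k, p div k) * ?P (q mod k) (p mod k)))"
    by (subst mtrace_mult_carrier[of _ "n * k" "n * k"]) (auto simp: tensor_proj_def)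
  also have "\<dots> = (\<Sum>i<n. \<Sum>a<k. \<Sum>j<n. \<Sum>b<k. A $$ (i, j) * ?P a b * (B $$ (j, i) * ?P b a))"
    by (cases "k = 0") (simp_all add: sum_lessThan_mult_nat)
  also have "\<dots> = (\<Sum>i<n. \<Sum>j<n. A $$ (i, j) * B $$ (j, i)
                    * ((\<Sum>a<k. ?P a a) * (\<Sum>b<k. ?P b b)))"
    by (intro sum.cong[OF refl], subst sum.swap)
      (simp add: sum_product sum_distrib_left mult.commute mult.left_commute)
  also have "\<dots> = mtrace (A * B) * (\<Sum>a<k. ?P a a)\<^sup>2"
    by (simp add: mtrace_mult_carrier[OF A B] sum_distrib_right power2_eq_square)
  finally show ?thesis .
qed

lemma superfidelity_tensor_proj:
  assumes "A \<in> carrier_mat n n" "B \<in> carrier_mat n n"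
    and "(\<Sum>a<k. \<phi> a * cnj (\<phi> a)) = 1"
  shows "superfidelity (tensor_proj n k \<phi> A) (tensor_proj n k \<phi> B) = superfidelity A B"
  using assms by (simp add: superfidelity_def mtrace_tensor_proj_mult)

lemma tensor_id_proj_product:
  assumes \<Theta>: "linear_map_on n \<Theta>" and \<psi>: "\<psi> \<in> carrier_vec n" and \<zeta>: "\<zeta> \<in> carrier_vec (n * k)"
    and product: "\<And>i a. i < n \<Longrightarrow> a < k \<Longrightarrow> \<zeta> $ (i * k + a) = \<psi> $ i * \<phi> a"
  shows "tensor_id n k \<Theta> (proj \<zeta>) = tensor_proj n k \<phi> (\<Theta> (proj \<psi>))"
proof (rule eq_matI)
  have \<sigma>: "proj \<psi> \<in> carrier_mat n n" using \<psi> by (simp add: proj_def)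
  then have \<Theta>\<sigma>: "\<Theta> (proj \<psi>) \<in> carrier_mat n n"
    and homogeneous: "\<And>c. \<Theta> (c \<cdot>\<^sub>m proj \<psi>) = c \<cdot>\<^sub>m \<Theta> (proj \<psi>)"
    using \<Theta> by (auto simp: linear_map_on_def)
  have block: "blk n k (proj \<zeta>) a b = (\<phi> a * cnj (\<phi> b)) \<cdot>\<^sub>m proj \<psi>" if "a < k" "b < k" for a b
    using that \<psi> \<zeta> by (intro eq_matI) (auto simp: blk_def proj_def mult_add_less_mult_nat product)
  fix p q assume "p < dim_row (tensor_proj n k \<phi> (\<Theta> (proj \<psi>)))"
    and "q < dim_col (tensor_proj n k \<phi> (\<Theta> (proj \<psi>)))"
  then have pq: "p < n * k" "q < n * k" by (auto simp: tensor_proj_def)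
  then have "k > 0" by (cases k) auto
  with pq have "p div k < n" "q div k < n" "p mod k < k" "q mod k < k"
    by (auto simp: less_mult_imp_div_less)
  with pq \<Theta>\<sigma> show "tensor_id n k \<Theta> (proj \<zeta>) $$ (p, q) = tensor_proj n k \<phi> (\<Theta> (proj \<psi>)) $$ (p, q)"
    by (simp add: tensor_id_def tensor_proj_def block homogeneous mult.commute)
qed (auto simp: tensor_id_def tensor_proj_def)

theorem corollary3:
  fixes n :: nat and \<Phi> \<Psi> :: "complex mat \<Rightarrow> complex mat" and \<psi> :: "complex vec"
  assumes "quantum_channel n \<Phi>" and "quantum_channel n \<Psi>"
    and "unit_vector n \<psi>"
  shows "channel_superfidelity n \<Phi> \<Psi> (proj \<psi>) = superfidelity (\<Phi> (proj \<psi>)) (\<Psi> (proj \<psi>))"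
proof -
  let ?S = "{(k, \<zeta>). unit_vector (n * k) \<zeta> \<and> ptrace_Z n k (proj \<zeta>) = proj \<psi>}"
  let ?G = "superfidelity (\<Phi> (proj \<psi>)) (\<Psi> (proj \<psi>))"
  have \<Phi>: "linear_map_on n \<Phi>" and \<Psi>: "linear_map_on n \<Psi>"
    using assms(1,2) by (auto simp: quantum_channel_def)
  have \<psi>: "\<psi> \<in> carrier_vec n" using assms(3) by (simp add: unit_vector_def)
  have purification_value: "superfidelity (tensor_id n k \<Phi> (proj \<zeta>)) (tensor_id n k \<Psi> (proj \<zeta>)) = ?G"
    if "(k, \<zeta>) \<in> ?S" for k \<zeta>
  proof -
    have \<zeta>: "\<zeta> \<in> carrier_vec (n * k)" and marginal: "ptrace_Z n k (proj \<zeta>) = proj \<psi>"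
      using that by (simp_all add: unit_vector_def)
    obtain \<phi> where unit: "(\<Sum>a<k. \<phi> a * cnj (\<phi> a)) = 1"
      and product: "\<And>i a. i < n \<Longrightarrow> a < k \<Longrightarrow> \<zeta> $ (i * k + a) = \<psi> $ i * \<phi> a"
      using ptrace_proj_eq_proj_imp_product[OF assms(3) \<zeta> marginal] by blast
    have "proj \<psi> \<in> carrier_mat n n" using \<psi> by (simp add: proj_def)
    then show ?thesis
      using \<Phi> \<Psi> unit
      by (simp add: tensor_id_proj_product[OF _ \<psi> \<zeta> product] superfidelity_tensor_proj
          linear_map_on_def)
  qed
  have "ptrace_Z n 1 (proj \<psi>) = proj \<psi>"
    using \<psi> by (intro eq_matI) (auto simp: ptrace_Z_def proj_def)
  then have "(1, \<psi>) \<in> ?S" using assms(3) by simp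
  then have "?S \<noteq> {}" by blast
  have "channel_superfidelity n \<Phi> \<Psi> (proj \<psi>) = (INF _ \<in> ?S. ?G)"
    unfolding channel_superfidelity_def by (rule INF_cong[OF refl]) (use purification_value in auto)
  also have "\<dots> = ?G" using cINF_const[OF \<open>?S \<noteq> {}\<close>] .
  finally show ?thesis .
qed

end
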